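(* Let $m>0$ and $a\neq 0$ be real parameters with $m^2\ge a^2$, and let $r_\pm=m\pm\sqrt{m^2-a^2}$. In cylindrical coordinates $(\rho,z)$ (with $\rho^2=x^2+y^2$) let $$r(\rho,z)=\sqrt{\frac{(R^2-a^2)+\sqrt{(R^2-a^2)^2+4a^2z^2}}{2}},\qquad R^2=\rho^2+z^2,$$ and let $$\Delta_1(\rho,z)=g^{11}g^{22}-(g^{12})^2=1-\frac{2mr^5\rho^2}{(r^4+a^2z^2)(r^2+a^2)^2}-\frac{2mrz^2}{r^4+a^2z^2},$$ where $$g^{11}=-1+\frac{2mr^5\rho^2}{(r^4+a^2z^2)(r^2+a^2)^2},\quad g^{22}=-1+\frac{2mrz^2}{r^4+a^2z^2},\quad g^{12}=\frac{2mr^3z\rho}{(r^4+a^2z^2)(r^2+a^2)}$$ are components of the inverse Kerr metric tensor. Then, at points where $\Delta_1$ is defined, the equation $\Delta_1(\rho,z)=0$ holds if and only if $r-r_+=0$ or $r-r_-=0$.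
   Context: The Kerr metric in Kerr–Schild coordinates is $ds^2=dt^2-dx^2-dy^2-dz^2-\frac{2mr^3}{r^4+a^2z^2}\big[dt+\frac{r(x\,dx+y\,dy)}{r^2+a^2}+\frac{a(y\,dx-x\,dy)}{r^2+a^2}+\frac{z}{r}dz\big]^2$. In cylindrical coordinates $(y_0,y_1,y_2,y_3)=(t,\rho,z,\varphi)$ its inverse tensor is $g^{jk}=\xi^{jk}+\frac{2mr^3}{r^4+a^2z^2}m^jm^k$, where $\xi^{jk}$ is diagonal with $\xi^{00}=1,\ \xi^{11}=\xi^{22}=-1,\ \xi^{33}=-1/\rho^2$, and $(m^0,m^1,m^2,m^3)=\big(-1,\frac{r\rho}{r^2+a^2},\frac{z}{r},\frac{-a}{r^2+a^2}\big)$. The curve $\Delta_1=0$ is called the restricted ergosphere. *)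

theory Defs
  imports Complex_Main
begin

definition kerr_r :: "real \<Rightarrow> real \<Rightarrow> real \<Rightarrow> real" where
  "kerr_r a \<rho> z =
     (let R2 = \<rho>\<^sup>2 + z\<^sup>2 in
      sqrt (((R2 - a\<^sup>2) + sqrt ((R2 - a\<^sup>2)\<^sup>2 + 4 * a\<^sup>2 * z\<^sup>2)) / 2))"

definition g11 :: "real \<Rightarrow> real \<Rightarrow> real \<Rightarrow> real \<Rightarrow> real" where
  "g11 m a \<rho> z = (let r = kerr_r a \<rho> z in
     -1 + 2 * m * r ^ 5 * \<rho>\<^sup>2 / ((r ^ 4 + a\<^sup>2 * z\<^sup>2) * (r\<^sup>2 + a\<^sup>2)\<^sup>2))"

definition g22 :: "real \<Rightarrow> real \<Rightarrow> real \<Rightarrow> real \<Rightarrow> real" where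
  "g22 m a \<rho> z = (let r = kerr_r a \<rho> z in
     -1 + 2 * m * r * z\<^sup>2 / (r ^ 4 + a\<^sup>2 * z\<^sup>2))"

definition g12 :: "real \<Rightarrow> real \<Rightarrow> real \<Rightarrow> real \<Rightarrow> real" where
  "g12 m a \<rho> z = (let r = kerr_r a \<rho> z in
     2 * m * r ^ 3 * z * \<rho> / ((r ^ 4 + a\<^sup>2 * z\<^sup>2) * (r\<^sup>2 + a\<^sup>2)))"

definition Delta1 :: "real \<Rightarrow> real \<Rightarrow> real \<Rightarrow> real \<Rightarrow> real" where
  "Delta1 m a \<rho> z = g11 m a \<rho> z * g22 m a \<rho> z - (g12 m a \<rho> z)\<^sup>2"

end

theory Submission
  imports Defs
begin

text \<open>
  The defining formula makes r^2 the positive root of X^2 - (\<rho>^2 + z^2 - a^2) X - a^2 z^2.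
  Using this relation, the numerator of the correction terms of g11 + g22 collapses,
  r^4 \<rho>^2 + z^2 (r^2 + a^2)^2 = (r^4 + a^2 z^2)(r^2 + a^2), while the product of the
  correction terms of g11 and g22 is exactly g12^2.  Hence \<Delta>1 = 1 - 2 m r / (r^2 + a^2),
  which vanishes iff r^2 - 2 m r + a^2 = 0, i.e. r = r+ or r = r-.
\<close>

lemma kerr_r_quartic:
  fixes a \<rho> z :: real
  shows "(kerr_r a \<rho> z)^4 - (\<rho>\<^sup>2 + z\<^sup>2 - a\<^sup>2) * (kerr_r a \<rho> z)\<^sup>2 - a\<^sup>2 * z\<^sup>2 = 0"
proof -
  define S where "S = \<rho>\<^sup>2 + z\<^sup>2 - a\<^sup>2"
  define q where "q = sqrt (S\<^sup>2 + 4 * a\<^sup>2 * z\<^sup>2)"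
  have q_sq: "q\<^sup>2 = S\<^sup>2 + 4 * a\<^sup>2 * z\<^sup>2"
    unfolding q_def by simp
  have "\<bar>S\<bar> \<le> q"
    unfolding q_def by (metis real_sqrt_abs real_sqrt_le_mono le_add_same_cancel1 zero_le_mult_iff
        zero_le_numeral zero_le_power2)
  then have r_sq: "(kerr_r a \<rho> z)\<^sup>2 = (S + q) / 2"
    unfolding kerr_r_def Let_def S_def[symmetric] q_def[symmetric] by (simp add: abs_le_iff)
  have "(kerr_r a \<rho> z)^4 = ((kerr_r a \<rho> z)\<^sup>2)\<^sup>2"
    by simp
  then show ?thesis
    unfolding r_sq S_def[symmetric] using q_sq by (simp add: power2_eq_square field_simps)
qed

lemma kerr_numerator_identity:
  fixes r a \<rho> z :: real
  assumes "r^4 - (\<rho>\<^sup>2 + z\<^sup>2 - a\<^sup>2) * r\<^sup>2 - a\<^sup>2 * z\<^sup>2 = 0"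
  shows "r^4 * \<rho>\<^sup>2 + z\<^sup>2 * (r\<^sup>2 + a\<^sup>2)\<^sup>2 = (r^4 + a\<^sup>2 * z\<^sup>2) * (r\<^sup>2 + a\<^sup>2)"
proof -
  have "r^4 * \<rho>\<^sup>2 + z\<^sup>2 * (r\<^sup>2 + a\<^sup>2)\<^sup>2 - (r^4 + a\<^sup>2 * z\<^sup>2) * (r\<^sup>2 + a\<^sup>2)
      = - r\<^sup>2 * (r^4 - (\<rho>\<^sup>2 + z\<^sup>2 - a\<^sup>2) * r\<^sup>2 - a\<^sup>2 * z\<^sup>2)"
    by (simp add: power2_eq_square power4_eq_xxxx algebra_simps)
  with assms show ?thesis
    by simp
qed

lemma det_of_rank_one_perturbation:
  fixes A B C E :: real
  assumes "A * B = C\<^sup>2" and "A + B = E"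
  shows "(-1 + A) * (-1 + B) - C\<^sup>2 = 1 - E"
  using assms by (simp add: algebra_simps)

lemma Delta1_eq:
  fixes m a \<rho> z :: real
  defines "r \<equiv> kerr_r a \<rho> z"
  assumes \<Sigma>_nz: "r^4 + a\<^sup>2 * z\<^sup>2 \<noteq> 0" and D_nz: "r\<^sup>2 + a\<^sup>2 \<noteq> 0"
  shows "Delta1 m a \<rho> z = 1 - 2 * m * r / (r\<^sup>2 + a\<^sup>2)"
proof -
  define \<Sigma> where "\<Sigma> = r^4 + a\<^sup>2 * z\<^sup>2"
  define D where "D = r\<^sup>2 + a\<^sup>2"
  have "\<Sigma> \<noteq> 0" "D \<noteq> 0"
    using \<Sigma>_nz D_nz unfolding \<Sigma>_def D_def by auto
  have numerator: "r^4 * \<rho>\<^sup>2 + z\<^sup>2 * D\<^sup>2 = \<Sigma> * D"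
    unfolding \<Sigma>_def D_def r_def by (rule kerr_numerator_identity[OF kerr_r_quartic])
  have product: "(2*m*r^5*\<rho>\<^sup>2/(\<Sigma>*D\<^sup>2)) * (2*m*r*z\<^sup>2/\<Sigma>) = (2*m*r^3*z*\<rho>/(\<Sigma>*D))\<^sup>2"
    using \<open>\<Sigma> \<noteq> 0\<close> \<open>D \<noteq> 0\<close> by (simp add: power2_eq_square field_simps eval_nat_numeral)
  have sum: "2*m*r^5*\<rho>\<^sup>2/(\<Sigma>*D\<^sup>2) + 2*m*r*z\<^sup>2/\<Sigma> = 2*m*r/D"
  proof -
    have "2*m*r^5*\<rho>\<^sup>2/(\<Sigma>*D\<^sup>2) + 2*m*r*z\<^sup>2/\<Sigma> = 2*m*r*(r^4*\<rho>\<^sup>2 + z\<^sup>2*D\<^sup>2)/(\<Sigma>*D\<^sup>2)"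
      using \<open>\<Sigma> \<noteq> 0\<close> \<open>D \<noteq> 0\<close> by (simp add: field_simps eval_nat_numeral)
    also have "\<dots> = 2*m*r/D"
      unfolding numerator using \<open>\<Sigma> \<noteq> 0\<close> \<open>D \<noteq> 0\<close> by (simp add: field_simps power2_eq_square)
    finally show ?thesis .
  qed
  have "Delta1 m a \<rho> z = (-1 + 2*m*r^5*\<rho>\<^sup>2/(\<Sigma>*D\<^sup>2)) * (-1 + 2*m*r*z\<^sup>2/\<Sigma>)
      - (2*m*r^3*z*\<rho>/(\<Sigma>*D))\<^sup>2"
    unfolding Delta1_def g11_def g22_def g12_def Let_def r_def[symmetric] \<Sigma>_def[symmetric]
      D_def[symmetric] ..
  also have "\<dots> = 1 - 2*m*r/D"
    by (rule det_of_rank_one_perturbation[OF product sum])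
  finally show ?thesis
    unfolding D_def .
qed

lemma one_minus_horizon_ratio_eq_0_iff:
  fixes m a r :: real
  assumes "m\<^sup>2 \<ge> a\<^sup>2" and "r\<^sup>2 + a\<^sup>2 \<noteq> 0"
  shows "1 - 2 * m * r / (r\<^sup>2 + a\<^sup>2) = 0 \<longleftrightarrow>
           r = m + sqrt (m\<^sup>2 - a\<^sup>2) \<or> r = m - sqrt (m\<^sup>2 - a\<^sup>2)"
proof -
  have "1 - 2 * m * r / (r\<^sup>2 + a\<^sup>2) = 0 \<longleftrightarrow> r\<^sup>2 + a\<^sup>2 = 2 * m * r"
    using assms(2) by (auto simp: divide_eq_eq)
  also have "\<dots> \<longleftrightarrow> (r - m)\<^sup>2 = (sqrt (m\<^sup>2 - a\<^sup>2))\<^sup>2"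
    using assms(1) by (simp add: power2_diff algebra_simps)
  also have "\<dots> \<longleftrightarrow> r - m = sqrt (m\<^sup>2 - a\<^sup>2) \<or> r - m = - sqrt (m\<^sup>2 - a\<^sup>2)"
    by (rule power2_eq_iff)
  finally show ?thesis
    by linarith
qed

theorem proposition2p1:
  fixes m a \<rho> z :: real
  assumes "m > 0" and "a \<noteq> 0" and "m\<^sup>2 \<ge> a\<^sup>2"
    and "\<rho> \<ge> 0"
    and "(kerr_r a \<rho> z) ^ 4 + a\<^sup>2 * z\<^sup>2 \<noteq> 0"
    and "(kerr_r a \<rho> z)\<^sup>2 + a\<^sup>2 \<noteq> 0"
  shows "Delta1 m a \<rho> z = 0 \<longleftrightarrow>
           (kerr_r a \<rho> z - (m + sqrt (m\<^sup>2 - a\<^sup>2)) = 0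
            \<or> kerr_r a \<rho> z - (m - sqrt (m\<^sup>2 - a\<^sup>2)) = 0)"
  using Delta1_eq[OF assms(5,6)] one_minus_horizon_ratio_eq_0_iff[OF assms(3,6)] by simp

end
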